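(* Let $d\ge1$, $D>0$, $\sigma\ge0$, $\alpha\in[0,1)$, $\rho>0$, and let $T$ be an even positive integer. Let $w^*\in\mathbb{R}^d$ with $\|w^*\|\le D$, and let $(x,\epsilon,b)$ be mutually independent random variables with $x\in\mathbb{R}^d$, $\|x\|\le1$ a.s., $\Sigma:=\mathbb{E}[(x-\mathbb{E}x)(x-\mathbb{E}x)^T]\succeq\rho I$, $\epsilon\in\mathbb{R}$, $|\epsilon|\le\sigma$ a.s., $\mathbb{E}\epsilon=0$, $b\in\mathbb{R}$, $\mathbb{P}(b\ne0)=\alpha$; set $y=\langle w^*,x\rangle+\epsilon+b$. Let $R=6D+\sigma$, $\lambda=(1-\alpha)\rho$, and let $\bar w$ be the output of the following algorithm, which uses $2T$ i.i.d. samples distributed as $(x,y)$: Phase 1: draw $T$ samples $(z_i,y_i)_{i=1}^T$ and set $\mu=\frac1T\sum_{i=1}^Tz_i$. Phase 2: set $w_1=0$; for $t=1,\dots,T$ draw a fresh sample $(x_t,y_t)$, set $\eta_t=\frac1{\lambda t}$, $g_t=\phi_R(\langle w_t,x_t-\mu\rangle-y_t)(x_t-\mu)$, $w_{t+1}=\Pi_{\mathcal W}(w_t-\eta_tg_t)$; output $\bar w=\frac2T\sum_{t=T/2+1}^Tw_t$. Then $$\mathbb{E}\|\bar w-w^*\|^2\le\frac{72R^2(2\log T+1)}{((1-\alpha)\rho)^2\,T}.$$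
   Context: $\mathcal W=\{w\in\mathbb{R}^d:\|w\|\le D\}$, $\Pi_{\mathcal W}$ is the Euclidean projection onto $\mathcal W$, and $\phi_R(s)=\min\{R,\max\{s,-R\}\}$ (the derivative of the Huber loss $h_R(s)=\frac12s^2$ for $|s|\le R$, $R(|s|-\frac12R)$ otherwise). The expectation is over all $2T$ samples. *)

theory Defs
  imports "HOL-Probability.Probability"
begin

text \<open>Clipped derivative of the Huber loss.\<close>
definition phi :: "real \<Rightarrow> real \<Rightarrow> real" where
  "phi R s = min R (max s (- R))"

text \<open>Euclidean projection onto W = closed ball of radius D.\<close>
definition projW :: "real \<Rightarrow> 'a::euclidean_space \<Rightarrow> 'a" where
  "projW D w = closest_point (cball 0 D) w"

text \<open>Phase 1: empirical mean of the first T covariates (samples indexed 0..T-1).\<close>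
definition phase1_mean :: "nat \<Rightarrow> (nat \<Rightarrow> 'a::euclidean_space \<times> real) \<Rightarrow> 'a" where
  "phase1_mean T s = (1 / real T) *\<^sub>R (\<Sum>i<T. fst (s i))"

text \<open>Phase 2 iterates: sgd_iter ... k = w_{k+1}; step t = k+1 uses the fresh sample s (T + k).\<close>
primrec sgd_iter :: "real \<Rightarrow> real \<Rightarrow> real \<Rightarrow> nat \<Rightarrow> (nat \<Rightarrow> 'a::euclidean_space \<times> real) \<Rightarrow> nat \<Rightarrow> 'a" where
  "sgd_iter D R lam T s 0 = 0"
| "sgd_iter D R lam T s (Suc k) =
     (let w = sgd_iter D R lam T s k;
          mu = phase1_mean T s;
          x = fst (s (T + k)); y = snd (s (T + k));
          eta = 1 / (lam * real (Suc k));
          g = phi R (inner w (x - mu) - y) *\<^sub>R (x - mu)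
      in projW D (w - eta *\<^sub>R g))"

text \<open>Output: w-bar = (2/T) * sum_{t = T/2+1}^{T} w_t, where w_t = sgd_iter ... (t - 1).\<close>
definition wbar :: "real \<Rightarrow> real \<Rightarrow> real \<Rightarrow> nat \<Rightarrow> (nat \<Rightarrow> 'a::euclidean_space \<times> real) \<Rightarrow> 'a" where
  "wbar D R lam T s = (2 / real T) *\<^sub>R (\<Sum>t\<in>{T div 2 + 1..T}. sgd_iter D R lam T s (t - 1))"

text \<open>Covariance (as a bilinear form) of a random vector with law Mx:
  cov_form Mx v u = E[<v, x - Ex> <u, x - Ex>] = v^T Sigma u.\<close>
definition cov_form :: "'a::euclidean_space measure \<Rightarrow> 'a \<Rightarrow> 'a \<Rightarrow> real" where
  "cov_form Mx v u =
     (let m = (\<integral>x. x \<partial>Mx) in \<integral>x. inner v (x - m) * inner u (x - m) \<partial>Mx)"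

definition sample_law :: "'a::euclidean_space \<Rightarrow> 'a measure \<Rightarrow> real measure \<Rightarrow> real measure \<Rightarrow> ('a \<times> real) measure" where
  "sample_law wstar Mx Me Mb =
     distr (Mx \<Otimes>\<^sub>M (Me \<Otimes>\<^sub>M Mb)) borel (\<lambda>(x, e, b). (x, inner wstar x + e + b))"

end

theory Submission
  imports Defs
begin

text \<open>
  Each SGD step is analysed conditionally on the past: the fresh sample is independent of the
  current iterate \<open>w\<close> and of the Phase 1 mean \<open>mu\<close>. For \<open>norm w \<le> D\<close> the clipped gradient \<open>g\<close>
  satisfies \<open>E \<langle>g, w - w\<^sup>*\<rangle> \<ge> \<lambda> \<parallel>w - w\<^sup>*\<parallel>\<^sup>2 - R \<parallel>w - w\<^sup>*\<parallel> \<parallel>E x - mu\<parallel>\<close>: on the event \<open>b = 0\<close>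
  (probability \<open>1 - \<alpha>\<close>) both the residual at \<open>w\<close> and the one at \<open>w\<^sup>*\<close> lie in the linear zone of
  \<open>phi R\<close>, and the covariance bound \<open>\<rho>\<close> yields the quadratic term; otherwise monotonicity of
  \<open>phi R\<close> makes the contribution nonnegative; the centring error only enters through
  \<open>E x - mu\<close>, since \<open>x\<close> is independent of \<open>(\<epsilon>, b)\<close>.

  With \<open>\<eta>\<^sub>t = 1/(\<lambda> t)\<close>, \<open>E \<parallel>g\<parallel>\<^sup>2 \<le> 4 R\<^sup>2\<close>, AM-GM and \<open>E \<parallel>mu - E x\<parallel>\<^sup>2 \<le> 4/T\<close>, the expected squared
  errors satisfy \<open>a\<^sub>t\<^sub>+\<^sub>1 \<le> (1 - 1/t) a\<^sub>t + 4C/(t T) + 4C/t\<^sup>2\<close> with \<open>C = R\<^sup>2/\<lambda>\<^sup>2\<close>. Hence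
  \<open>a\<^sub>t \<le> 4C/T + 4C H\<^sub>t/t\<close>, which is \<open>O(C log T / T)\<close> on the second half of the iterates, and
  Jensen's inequality transfers this bound to their average.
\<close>

section \<open>Elementary inequalities\<close>

lemma harm_le_ln_add_one:
  assumes "n \<ge> 1"
  shows "harm n \<le> ln (real n) + (1::real)"
  using assms
proof (induction n rule: nat_induct_at_least)
  case base
  then show ?case by (simp add: harm_def)
next
  case (Suc n)
  have n: "real n > 0" using Suc by simp
  have "ln (real n / real (Suc n)) \<le> real n / real (Suc n) - 1"
    using n by (intro ln_le_minus_one) auto
  also have "\<dots> = - inverse (real (Suc n))" by (simp add: field_simps)
  finally have "ln (real n) + inverse (real (Suc n)) \<le> ln (real (Suc n))"
    using n by (simp add: ln_div)
  with Suc show ?case by (simp add: harm_Suc)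
qed

text \<open>Multiplying the recursion by \<open>k + 1\<close> makes it telescope.\<close>

lemma recursion_le_harm:
  fixes a :: "nat \<Rightarrow> real"
  assumes "\<And>k. k < n \<Longrightarrow>
    a (Suc k) \<le> (1 - 1 / real (Suc k)) * a k + c / real (Suc k) + d / (real (Suc k))\<^sup>2"
  shows "real n * a n \<le> real n * c + d * harm n"
  using assms
proof (induction n)
  case 0
  then show ?case by (simp add: harm_def)
next
  case (Suc n)
  define t where "t = real (Suc n)"
  have t: "t > 0" "t - 1 = real n" unfolding t_def by auto
  have "t * a (Suc n) \<le> t * ((1 - 1 / t) * a n + c / t + d / t\<^sup>2)"
    using Suc.prems[of n] t(1) unfolding t_def by (intro mult_left_mono) auto
  also have "\<dots> = (t - 1) * a n + c + d / t"
    using t(1) by (simp add: field_simps power2_eq_square)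
  also have "\<dots> = real n * a n + c + d / t"
    using t by simp
  also have "\<dots> \<le> real n * c + d * harm n + c + d / t"
    using Suc by simp
  also have "\<dots> = t * c + d * harm (Suc n)"
    using t by (simp add: harm_Suc t_def[symmetric] inverse_eq_divide algebra_simps)
  finally show ?case unfolding t_def .
qed

lemma norm_mean_squared_le:
  fixes f :: "'b \<Rightarrow> 'a::real_normed_vector"
  assumes "finite S" "S \<noteq> {}"
  shows "(norm ((1 / real (card S)) *\<^sub>R (\<Sum>t\<in>S. f t)))\<^sup>2 \<le> (\<Sum>t\<in>S. (norm (f t))\<^sup>2) / real (card S)"
proof -
  have c: "real (card S) > 0" using assms by (simp add: card_gt_0_iff)
  have "(norm (\<Sum>t\<in>S. f t))\<^sup>2 \<le> (\<Sum>t\<in>S. norm (f t))\<^sup>2"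
    by (intro power_mono norm_sum) auto
  also have "\<dots> \<le> (\<Sum>t\<in>S. (norm (f t))\<^sup>2) * real (card S)"
    by (rule sum_squared_le_sum_of_squares)
  finally show ?thesis
    using c by (simp add: power2_eq_square field_simps)
qed

lemma abs_inner_le_of_norm_le:
  fixes a v :: "'a::real_inner"
  assumes "norm a \<le> B"
  shows "\<bar>a \<bullet> v\<bar> \<le> B * norm v"
  using Cauchy_Schwarz_ineq2[of a v] mult_right_mono[OF assms norm_ge_zero[of v]] by linarith

lemma abs_inner_diff_le:
  fixes v x mu :: "'a::real_inner"
  assumes "norm x \<le> 1" "norm mu \<le> 1"
  shows "\<bar>v \<bullet> (x - mu)\<bar> \<le> 2 * norm v"
proof -
  have "norm (x - mu) \<le> 2"
    using assms norm_triangle_ineq4[of x mu] by linarith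
  then show ?thesis
    using abs_inner_le_of_norm_le[of "x - mu" 2 v] by (simp add: inner_commute)
qed

lemma norm_diff_scaleR_sq:
  fixes v g :: "'a::real_inner"
  shows "(norm (v - c *\<^sub>R g))\<^sup>2 = (norm v)\<^sup>2 - 2 * c * (g \<bullet> v) + c\<^sup>2 * (norm g)\<^sup>2"
  unfolding power2_norm_eq_inner
  by (simp add: inner_commute power2_eq_square algebra_simps)

lemma sgd_step_bound_le:
  fixes x d R lam t :: real
  assumes lam: "lam > 0" and t: "t > 0"
  defines "eta \<equiv> 1 / (lam * t)"
  shows "x\<^sup>2 - 2 * eta * (lam * x\<^sup>2 - R * x * d) + eta\<^sup>2 * (4 * R\<^sup>2)
    \<le> (1 - 1 / t) * x\<^sup>2 + R\<^sup>2 / lam\<^sup>2 / t * d\<^sup>2 + 4 * (R\<^sup>2 / lam\<^sup>2) / t\<^sup>2"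
proof -
  define b where "b = R * d / lam"
  have "2 * x * b \<le> x\<^sup>2 + b\<^sup>2"
    using sum_squares_ge_zero[of "x - b" 0] by (simp add: power2_eq_square algebra_simps)
  then have "2 * x * b / t \<le> (x\<^sup>2 + b\<^sup>2) / t"
    using t by (intro divide_right_mono) auto
  moreover have "x\<^sup>2 - 2 * eta * (lam * x\<^sup>2 - R * x * d) + eta\<^sup>2 * (4 * R\<^sup>2)
      = (1 - 2 / t) * x\<^sup>2 + 2 * x * b / t + 4 * (R\<^sup>2 / lam\<^sup>2) / t\<^sup>2"
    using lam t by (simp add: eta_def b_def field_simps power2_eq_square)
  moreover have "(1 - 1 / t) * x\<^sup>2 + R\<^sup>2 / lam\<^sup>2 / t * d\<^sup>2 + 4 * (R\<^sup>2 / lam\<^sup>2) / t\<^sup>2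
      = (1 - 2 / t) * x\<^sup>2 + (x\<^sup>2 + b\<^sup>2) / t + 4 * (R\<^sup>2 / lam\<^sup>2) / t\<^sup>2"
    using lam t by (simp add: b_def field_simps power2_eq_square)
  ultimately show ?thesis
    by linarith
qed

section \<open>Integrals over product spaces\<close>

lemma integrable_bounded_AE:
  fixes f :: "'a \<Rightarrow> 'b::{banach,second_countable_topology}"
  assumes "finite_measure M" "f \<in> borel_measurable M" "AE x in M. P x"
    and "\<And>x. P x \<Longrightarrow> norm (f x) \<le> B"
  shows "integrable M f"
  using assms by (intro finite_measure.integrable_const_bound[of M _ B]) auto

lemma fst_borel_measurable:
  "(fst :: 'a::topological_space \<times> 'b::topological_space \<Rightarrow> 'a) \<in> borel_measurable borel"
  by (intro borel_measurable_continuous_onI continuous_on_fst continuous_on_id)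

lemma (in pair_sigma_finite) integral_fst_mult_snd:
  fixes f :: "'a \<Rightarrow> real" and g :: "'b \<Rightarrow> real"
  assumes "integrable (M1 \<Otimes>\<^sub>M M2) (\<lambda>z. f (fst z) * g (snd z))"
  shows "(\<integral>z. f (fst z) * g (snd z) \<partial>(M1 \<Otimes>\<^sub>M M2)) = integral\<^sup>L M1 f * integral\<^sup>L M2 g"
proof -
  have "(\<integral>z. f (fst z) * g (snd z) \<partial>(M1 \<Otimes>\<^sub>M M2)) = (\<integral>x. (\<integral>y. f x * g y \<partial>M2) \<partial>M1)"
    using integral_fst'[OF assms] by simp
  also have "\<dots> = integral\<^sup>L M1 f * integral\<^sup>L M2 g"
    by simp
  finally show ?thesis .
qed

lemma product_prob_space_const:
  assumes "prob_space M"
  shows "product_prob_space (\<lambda>_. M)"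
  using assms
  by (simp add: product_prob_space_def product_prob_space_axioms_def product_sigma_finite_def
      prob_space_imp_sigma_finite)

lemma (in product_prob_space)
  fixes f g :: "'a \<Rightarrow> real"
  assumes J: "finite J" "i \<in> J" "j \<in> J" "i \<noteq> j"
    and f: "integrable (M i) f" and g: "integrable (M j) g"
  shows integrable_component_mult: "integrable (Pi\<^sub>M J M) (\<lambda>x. f (x i) * g (x j))"
    and integral_component_mult:
      "(\<integral>x. f (x i) * g (x j) \<partial>Pi\<^sub>M J M) = integral\<^sup>L (M i) f * integral\<^sup>L (M j) g"
proof -
  define h where "h l = (if l = i then f else if l = j then g else (\<lambda>_. 1))" for l
  have h_int: "integrable (M l) (h l)" for l
    using f g by (simp add: h_def)
  have "(\<Prod>l\<in>J. h l (x l)) = (\<Prod>l\<in>{i, j}. h l (x l))" for x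
    using J by (intro prod.mono_neutral_right) (auto simp: h_def)
  then have eq: "(\<lambda>x. f (x i) * g (x j)) = (\<lambda>x. \<Prod>l\<in>J. h l (x l))"
    using J by (simp add: h_def)
  show "integrable (Pi\<^sub>M J M) (\<lambda>x. f (x i) * g (x j))"
    unfolding eq using J(1) h_int by (rule product_integrable_prod)
  have "(\<integral>x. f (x i) * g (x j) \<partial>Pi\<^sub>M J M) = (\<Prod>l\<in>J. integral\<^sup>L (M l) (h l))"
    unfolding eq using J(1) h_int by (rule product_integral_prod)
  also have "\<dots> = (\<Prod>l\<in>{i, j}. integral\<^sup>L (M l) (h l))"
    using J by (intro prod.mono_neutral_right) (auto simp: h_def M.prob_space)
  finally show "(\<integral>x. f (x i) * g (x j) \<partial>Pi\<^sub>M J M) = integral\<^sup>L (M i) f * integral\<^sup>L (M j) g"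
    using J by (simp add: h_def)
qed

lemma (in product_prob_space) integral_inner_components:
  fixes f g :: "'a \<Rightarrow> 'b::euclidean_space"
  assumes J: "finite J" "i \<in> J" "j \<in> J" "i \<noteq> j"
    and f: "integrable (M i) f" and g: "integrable (M j) g"
  shows "(\<integral>x. f (x i) \<bullet> g (x j) \<partial>Pi\<^sub>M J M) = integral\<^sup>L (M i) f \<bullet> integral\<^sup>L (M j) g"
proof -
  have int_b: "integrable (M i) (\<lambda>y. f y \<bullet> b)" "integrable (M j) (\<lambda>y. g y \<bullet> b)" for b
    using f g by auto
  have "(\<integral>x. f (x i) \<bullet> g (x j) \<partial>Pi\<^sub>M J M)
      = (\<integral>x. (\<Sum>b\<in>Basis. (f (x i) \<bullet> b) * (g (x j) \<bullet> b)) \<partial>Pi\<^sub>M J M)"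
    by (intro Bochner_Integration.integral_cong refl euclidean_inner)
  also have "\<dots> = (\<Sum>b\<in>Basis. \<integral>x. (f (x i) \<bullet> b) * (g (x j) \<bullet> b) \<partial>Pi\<^sub>M J M)"
    using J int_b by (intro Bochner_Integration.integral_sum integrable_component_mult)
  also have "\<dots> = (\<Sum>b\<in>Basis. (\<integral>y. f y \<bullet> b \<partial>M i) * (\<integral>y. g y \<bullet> b \<partial>M j))"
    using J int_b by (intro sum.cong refl integral_component_mult)
  also have "\<dots> = (\<Sum>b\<in>Basis. (integral\<^sup>L (M i) f \<bullet> b) * (integral\<^sup>L (M j) g \<bullet> b))"
    using f g by simp
  also have "\<dots> = integral\<^sup>L (M i) f \<bullet> integral\<^sup>L (M j) g"
    by (rule euclidean_inner[symmetric])
  finally show ?thesis .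
qed

lemma (in product_prob_space) nn_integral_insert_le_of_fresh:
  assumes J: "finite J" "i \<notin> J"
    and f: "f \<in> borel_measurable (Pi\<^sub>M (insert i J) M)"
    and g: "g \<in> borel_measurable (Pi\<^sub>M (insert i J) M)"
    and g_indep: "\<And>x y. g (x(i := y)) = g x"
    and fg: "AE x in Pi\<^sub>M J M. (\<integral>\<^sup>+ y. f (x(i := y)) \<partial>M i) \<le> g x"
  shows "(\<integral>\<^sup>+ x. f x \<partial>Pi\<^sub>M (insert i J) M) \<le> (\<integral>\<^sup>+ x. g x \<partial>Pi\<^sub>M (insert i J) M)"
proof -
  have "(\<integral>\<^sup>+ x. f x \<partial>Pi\<^sub>M (insert i J) M) = (\<integral>\<^sup>+ x. (\<integral>\<^sup>+ y. f (x(i := y)) \<partial>M i) \<partial>Pi\<^sub>M J M)"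
    using J f by (rule product_nn_integral_insert)
  also have "\<dots> \<le> (\<integral>\<^sup>+ x. g x \<partial>Pi\<^sub>M J M)"
    using fg by (rule nn_integral_mono_AE)
  also have "\<dots> = (\<integral>\<^sup>+ x. (\<integral>\<^sup>+ y. g (x(i := y)) \<partial>M i) \<partial>Pi\<^sub>M J M)"
    by (simp add: g_indep M.emeasure_space_1)
  also have "\<dots> = (\<integral>\<^sup>+ x. g x \<partial>Pi\<^sub>M (insert i J) M)"
    using J g by (rule product_nn_integral_insert[symmetric])
  finally show ?thesis .
qed

lemma (in product_prob_space) integral_component:
  fixes h :: "'a \<Rightarrow> 'b::{banach,second_countable_topology}"
  assumes i: "i \<in> J" and h: "h \<in> borel_measurable (M i)"
  shows "(\<integral>x. h (x i) \<partial>Pi\<^sub>M J M) = integral\<^sup>L (M i) h"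
proof -
  have "(\<integral>x. h (x i) \<partial>Pi\<^sub>M J M) = (\<integral>y. h y \<partial>distr (Pi\<^sub>M J M) (M i) (\<lambda>x. x i))"
    using i h by (subst integral_distr) auto
  also have "distr (Pi\<^sub>M J M) (M i) (\<lambda>x. x i) = M i"
    using i by (intro distr_PiM_component M.prob_space_axioms)
  finally show ?thesis .
qed

lemma (in product_prob_space) integrable_inner_components:
  fixes f :: "'a \<Rightarrow> 'b::euclidean_space"
  assumes ij: "i \<in> J" "j \<in> J"
    and f: "f \<in> borel_measurable (M i)" "f \<in> borel_measurable (M j)"
    and bnd: "AE y in M i. norm (f y) \<le> B" "AE y in M j. norm (f y) \<le> B"
  shows "integrable (Pi\<^sub>M J M) (\<lambda>x. f (x i) \<bullet> f (x j))"
proof (rule integrable_bounded_AE[where B = "B * B"])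
  show "finite_measure (Pi\<^sub>M J M)"
    by (intro prob_space.finite_measure prob_space_PiM M.prob_space_axioms)
  have [measurable]: "i \<in> J" "j \<in> J" "f \<in> borel_measurable (M i)" "f \<in> borel_measurable (M j)"
    using ij f by auto
  show "(\<lambda>x. f (x i) \<bullet> f (x j)) \<in> borel_measurable (Pi\<^sub>M J M)"
    by measurable
  show "AE x in Pi\<^sub>M J M. norm (f (x i)) \<le> B \<and> norm (f (x j)) \<le> B"
  proof -
    have "AE x in Pi\<^sub>M J M. norm (f (x i)) \<le> B" "AE x in Pi\<^sub>M J M. norm (f (x j)) \<le> B"
      using ij bnd by (auto intro!: AE_PiM_component M.prob_space_axioms)
    then show ?thesis
      by eventually_elim auto
  qed
  fix x :: "'i \<Rightarrow> 'a"
  assume "norm (f (x i)) \<le> B \<and> norm (f (x j)) \<le> B"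
  then show "norm (f (x i) \<bullet> f (x j)) \<le> B * B"
    using Cauchy_Schwarz_ineq2[of "f (x i)" "f (x j)"]
      mult_mono[of "norm (f (x i))" B "norm (f (x j))" B] by auto
qed

lemma (in product_prob_space)
  fixes f :: "'a \<Rightarrow> 'b::euclidean_space"
  assumes J: "finite J" "A \<subseteq> J"
    and f: "\<And>i. i \<in> A \<Longrightarrow> f \<in> borel_measurable (M i)"
    and bnd: "\<And>i. i \<in> A \<Longrightarrow> AE y in M i. norm (f y) \<le> B"
    and centred: "\<And>i. i \<in> A \<Longrightarrow> integral\<^sup>L (M i) f = 0"
  shows integrable_norm_sum_components_sq: "integrable (Pi\<^sub>M J M) (\<lambda>x. (norm (\<Sum>i\<in>A. f (x i)))\<^sup>2)"
    and integral_norm_sum_components_sq: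
      "(\<integral>x. (norm (\<Sum>i\<in>A. f (x i)))\<^sup>2 \<partial>Pi\<^sub>M J M) = (\<Sum>i\<in>A. \<integral>y. (norm (f y))\<^sup>2 \<partial>M i)"
proof -
  have A: "finite A"
    using J finite_subset by blast
  have int: "integrable (Pi\<^sub>M J M) (\<lambda>x. f (x i) \<bullet> f (x j))" if "i \<in> A" "j \<in> A" for i j
    using that J f bnd by (intro integrable_inner_components) auto
  have sq_eq: "(norm (\<Sum>i\<in>A. f (x i)))\<^sup>2 = (\<Sum>i\<in>A. \<Sum>j\<in>A. f (x i) \<bullet> f (x j))" for x
    by (simp add: power2_norm_eq_inner inner_sum_left inner_sum_right) (rule sum.swap)
  show "integrable (Pi\<^sub>M J M) (\<lambda>x. (norm (\<Sum>i\<in>A. f (x i)))\<^sup>2)"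
    unfolding sq_eq using int by (intro Bochner_Integration.integrable_sum) auto
  have diag: "(\<integral>x. f (x i) \<bullet> f (x i) \<partial>Pi\<^sub>M J M) = (\<integral>y. (norm (f y))\<^sup>2 \<partial>M i)" if "i \<in> A" for i
    using that J f[OF that] by (subst integral_component) (auto simp: power2_norm_eq_inner)
  have cross: "(\<integral>x. f (x i) \<bullet> f (x j) \<partial>Pi\<^sub>M J M) = 0" if "i \<in> A" "j \<in> A" "i \<noteq> j" for i j
  proof -
    have "integrable (M l) f" if "l \<in> A" for l
      using M.finite_measure_axioms f[OF that] bnd[OF that] by (rule integrable_bounded_AE)
    then show ?thesis
      using that J centred by (subst integral_inner_components) auto
  qed
  have "(\<integral>x. (norm (\<Sum>i\<in>A. f (x i)))\<^sup>2 \<partial>Pi\<^sub>M J M) = (\<Sum>i\<in>A. \<Sum>j\<in>A. \<integral>x. f (x i) \<bullet> f (x j) \<partial>Pi\<^sub>M J M)"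
    unfolding sq_eq using int by (simp add: Bochner_Integration.integral_sum)
  also have "\<dots> = (\<Sum>i\<in>A. \<integral>y. (norm (f y))\<^sup>2 \<partial>M i)"
  proof (rule sum.cong[OF refl])
    fix i
    assume i: "i \<in> A"
    have "(\<Sum>j\<in>A. \<integral>x. f (x i) \<bullet> f (x j) \<partial>Pi\<^sub>M J M)
        = (\<integral>x. f (x i) \<bullet> f (x i) \<partial>Pi\<^sub>M J M) + (\<Sum>j\<in>A - {i}. \<integral>x. f (x i) \<bullet> f (x j) \<partial>Pi\<^sub>M J M)"
      using A i by (rule sum.remove)
    also have "(\<Sum>j\<in>A - {i}. \<integral>x. f (x i) \<bullet> f (x j) \<partial>Pi\<^sub>M J M) = 0"
      using i cross by (intro sum.neutral) auto
    finally show "(\<Sum>j\<in>A. \<integral>x. f (x i) \<bullet> f (x j) \<partial>Pi\<^sub>M J M) = (\<integral>y. (norm (f y))\<^sup>2 \<partial>M i)"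
      using diag[OF i] by simp
  qed
  finally show "(\<integral>x. (norm (\<Sum>i\<in>A. f (x i)))\<^sup>2 \<partial>Pi\<^sub>M J M) = (\<Sum>i\<in>A. \<integral>y. (norm (f y))\<^sup>2 \<partial>M i)" .
qed

lemma integral_norm_sq_le:
  fixes f :: "'a \<Rightarrow> 'b::real_normed_vector"
  assumes M: "prob_space M" and f: "f \<in> borel_measurable M" and bnd: "AE x in M. norm (f x) \<le> B"
  shows "(\<integral>x. (norm (f x))\<^sup>2 \<partial>M) \<le> B\<^sup>2"
proof (rule prob_space.integral_le_const[OF M])
  show "AE x in M. (norm (f x))\<^sup>2 \<le> B\<^sup>2"
    using bnd by eventually_elim (auto intro: power_mono)
  show "integrable M (\<lambda>x. (norm (f x))\<^sup>2)"
    using prob_space.finite_measure[OF M] _ bnd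
    by (rule integrable_bounded_AE[where B = "B\<^sup>2"]) (use f in \<open>auto intro: power_mono\<close>)
qed

lemma
  fixes M :: "'b measure" and f :: "'b \<Rightarrow> 'a::euclidean_space"
  assumes M: "prob_space M" and f: "f \<in> borel_measurable M"
    and bnd: "AE y in M. norm (f y - integral\<^sup>L M f) \<le> B"
    and I: "finite I" "{..<n} \<subseteq> I" and n: "n > 0"
  defines "err s \<equiv> (1 / real n) *\<^sub>R (\<Sum>i<n. f (s i)) - integral\<^sup>L M f"
  shows integrable_empirical_mean_sq_err: "integrable (Pi\<^sub>M I (\<lambda>_. M)) (\<lambda>s. (norm (err s))\<^sup>2)"
    and empirical_mean_variance_le: "(\<integral>s. (norm (err s))\<^sup>2 \<partial>Pi\<^sub>M I (\<lambda>_. M)) \<le> B\<^sup>2 / real n"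
proof -
  interpret M: prob_space M by (fact M)
  interpret product_prob_space "\<lambda>_. M" I
    using M by (rule product_prob_space_const)
  define u where "u = (\<lambda>y. f y - integral\<^sup>L M f)"
  have u_meas: "u \<in> borel_measurable M"
    using f unfolding u_def by simp
  have u_bnd: "AE y in M. norm (u y) \<le> B"
    using bnd by (simp add: u_def)
  have "integrable M u"
    using M.finite_measure_axioms u_meas u_bnd by (rule integrable_bounded_AE)
  then have "integrable M (\<lambda>y. u y + integral\<^sup>L M f)"
    by simp
  then have "integrable M f"
    by (simp add: u_def)
  then have u_centred: "integral\<^sup>L M u = 0"
    by (simp add: u_def M.prob_space)
  have err_sq: "(norm (err s))\<^sup>2 = (1 / real n)\<^sup>2 * (norm (\<Sum>i<n. u (s i)))\<^sup>2" for s
  proof -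
    have "err s = (1 / real n) *\<^sub>R (\<Sum>i<n. u (s i))"
      using n by (simp add: err_def u_def sum_subtractf scaleR_diff_right sum_constant_scaleR)
    then show ?thesis
      by (simp add: power_divide)
  qed
  have sum_sq: "integrable (Pi\<^sub>M I (\<lambda>_. M)) (\<lambda>s. (norm (\<Sum>i<n. u (s i)))\<^sup>2)"
      "(\<integral>s. (norm (\<Sum>i<n. u (s i)))\<^sup>2 \<partial>Pi\<^sub>M I (\<lambda>_. M)) = (\<Sum>i<n. \<integral>y. (norm (u y))\<^sup>2 \<partial>M)"
    using I u_meas u_bnd u_centred
    by (intro integrable_norm_sum_components_sq integral_norm_sum_components_sq; simp)+
  show "integrable (Pi\<^sub>M I (\<lambda>_. M)) (\<lambda>s. (norm (err s))\<^sup>2)"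
    unfolding err_sq using sum_sq(1) by simp
  have "(\<integral>y. (norm (u y))\<^sup>2 \<partial>M) \<le> B\<^sup>2"
    using M u_meas u_bnd by (rule integral_norm_sq_le)
  then have "(\<integral>s. (norm (err s))\<^sup>2 \<partial>Pi\<^sub>M I (\<lambda>_. M)) \<le> (1 / real n)\<^sup>2 * (real n * B\<^sup>2)"
    unfolding err_sq using sum_sq by (simp add: mult_left_mono)
  also have "\<dots> = B\<^sup>2 / real n"
    using n by (simp add: power2_eq_square)
  finally show "(\<integral>s. (norm (err s))\<^sup>2 \<partial>Pi\<^sub>M I (\<lambda>_. M)) \<le> B\<^sup>2 / real n" .
qed

lemma second_moment_eq_cov_form:
  fixes M :: "'a::euclidean_space measure" and v c :: 'a
  assumes M: "prob_space M" and X: "integrable M (\<lambda>x. x)" and X2: "integrable M (\<lambda>x. (v \<bullet> x)\<^sup>2)"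
  shows "(\<integral>x. (v \<bullet> (x - c))\<^sup>2 \<partial>M) = cov_form M v v + (v \<bullet> ((\<integral>x. x \<partial>M) - c))\<^sup>2"
proof -
  interpret prob_space M by (fact M)
  define m where "m = (\<integral>x. x \<partial>M)"
  have lin: "integrable M (\<lambda>x. v \<bullet> x)"
    using X by simp
  have sq: "integrable M (\<lambda>x. (v \<bullet> (x - d))\<^sup>2)" for d
  proof -
    have "(v \<bullet> (x - d))\<^sup>2 = (v \<bullet> x)\<^sup>2 - 2 * (v \<bullet> d) * (v \<bullet> x) + (v \<bullet> d)\<^sup>2" for x
      by (simp add: power2_eq_square algebra_simps)
    then show ?thesis
      using X2 lin by simp
  qed
  have "(\<integral>x. v \<bullet> x \<partial>M) = v \<bullet> m"
    unfolding m_def using X by (rule integral_inner_right)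
  then have centred: "(\<integral>x. v \<bullet> (x - m) \<partial>M) = 0"
    using lin by (simp add: inner_diff_right prob_space)
  define a where "a = v \<bullet> (m - c)"
  have lin_m: "integrable M (\<lambda>x. v \<bullet> (x - m))"
    using lin by (simp add: inner_diff_right)
  have "(v \<bullet> (x - c))\<^sup>2 = (v \<bullet> (x - m))\<^sup>2 + (2 * a * (v \<bullet> (x - m)) + a\<^sup>2)" for x
    unfolding a_def by (simp add: power2_eq_square algebra_simps)
  then have "(\<integral>x. (v \<bullet> (x - c))\<^sup>2 \<partial>M)
      = (\<integral>x. (v \<bullet> (x - m))\<^sup>2 \<partial>M) + (2 * a * (\<integral>x. v \<bullet> (x - m) \<partial>M) + a\<^sup>2)"
    using sq lin_m by (simp add: prob_space)
  then show ?thesis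
    using centred by (simp add: cov_form_def Let_def a_def m_def power2_eq_square)
qed

section \<open>Clipped gradient steps\<close>

lemma abs_phi_le: "0 \<le> R \<Longrightarrow> \<bar>phi R s\<bar> \<le> R"
  unfolding phi_def by auto

lemma phi_eq_self: "\<bar>s\<bar> \<le> R \<Longrightarrow> phi R s = s"
  unfolding phi_def by auto

lemma phi_mono: "a \<le> b \<Longrightarrow> phi R a \<le> phi R b"
  unfolding phi_def by auto

lemma phi_diff_mult_nonneg: "0 \<le> (phi R a - phi R c) * (a - c)"
  using phi_mono[of a c R] phi_mono[of c a R]
  by (cases "a \<le> c") (auto intro: mult_nonpos_nonpos)

lemma continuous_on_phi [continuous_intros]:
  "continuous_on S f \<Longrightarrow> continuous_on S (\<lambda>x. phi R (f x))"
  unfolding phi_def by (intro continuous_intros)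

lemma norm_projW_le: "0 \<le> D \<Longrightarrow> norm (projW D u) \<le> D"
  using closest_point_in_set[of "cball 0 D" u] by (simp add: projW_def)

lemma norm_projW_diff_le:
  assumes "norm w \<le> D"
  shows "norm (projW D u - w) \<le> norm (u - w)"
proof -
  have "closest_point (cball 0 D) w = w"
    using assms by (intro closest_point_self) auto
  moreover have "0 \<le> D"
    using assms norm_ge_zero order_trans by blast
  ultimately show ?thesis
    using closest_point_lipschitz[of "cball 0 D" u w] by (simp add: projW_def dist_norm)
qed

lemma continuous_on_projW [continuous_intros]:
  "0 \<le> D \<Longrightarrow> continuous_on S f \<Longrightarrow> continuous_on S (\<lambda>x. projW D (f x))"
  unfolding projW_def
  by (rule continuous_on_compose2[OF continuous_on_closest_point[of "cball 0 D" UNIV]]) auto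

lemma borel_measurable_projW [measurable]: "0 \<le> D \<Longrightarrow> projW D \<in> borel_measurable borel"
  by (intro borel_measurable_continuous_onI continuous_intros continuous_on_id)

definition huber_grad :: "real \<Rightarrow> 'a::euclidean_space \<Rightarrow> 'a \<Rightarrow> 'a \<times> real \<Rightarrow> 'a" where
  "huber_grad R w mu p = phi R (w \<bullet> (fst p - mu) - snd p) *\<^sub>R (fst p - mu)"

lemma continuous_on_huber_grad [continuous_intros]:
  "continuous_on S w \<Longrightarrow> continuous_on S mu \<Longrightarrow> continuous_on S p \<Longrightarrow>
    continuous_on S (\<lambda>x. huber_grad R (w x) (mu x) (p x))"
  unfolding huber_grad_def by (intro continuous_intros)

lemma norm_huber_grad_le:
  assumes "0 \<le> R" "norm (fst p) \<le> 1" "norm mu \<le> 1"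
  shows "norm (huber_grad R w mu p) \<le> 2 * R"
proof -
  have "norm (fst p - mu) \<le> 2"
    using assms norm_triangle_ineq4[of "fst p" mu] by linarith
  then have "\<bar>phi R (w \<bullet> (fst p - mu) - snd p)\<bar> * norm (fst p - mu) \<le> R * 2"
    using abs_phi_le[OF assms(1)] assms(1) by (intro mult_mono) auto
  then show ?thesis
    by (simp add: huber_grad_def mult.commute)
qed

lemma sgd_iter_Suc':
  "sgd_iter D R lam T s (Suc k) =
    projW D (sgd_iter D R lam T s k - (1 / (lam * real (Suc k))) *\<^sub>R
      huber_grad R (sgd_iter D R lam T s k) (phase1_mean T s) (s (T + k)))"
  by (simp add: Let_def huber_grad_def)

lemma norm_sgd_iter_le: "0 \<le> D \<Longrightarrow> norm (sgd_iter D R lam T s k) \<le> D"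
  by (cases k) (simp_all add: Let_def norm_projW_le)

lemma phase1_mean_cong: "(\<And>j. j < T \<Longrightarrow> s j = s' j) \<Longrightarrow> phase1_mean T s = phase1_mean T s'"
  unfolding phase1_mean_def by simp

lemma sgd_iter_cong:
  "(\<And>j. j < T + k \<Longrightarrow> s j = s' j) \<Longrightarrow> sgd_iter D R lam T s k = sgd_iter D R lam T s' k"
proof (induction k)
  case (Suc k)
  then have "phase1_mean T s = phase1_mean T s'"
    by (intro phase1_mean_cong) auto
  with Suc show ?case
    by (simp add: Let_def)
qed simp

lemma norm_phase1_mean_le:
  assumes "\<And>i. i < T \<Longrightarrow> norm (fst (s i)) \<le> 1"
  shows "norm (phase1_mean T s) \<le> 1"
proof -
  have "norm (phase1_mean T s) \<le> (1 / real T) * (\<Sum>i<T. norm (fst (s i)))"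
    unfolding phase1_mean_def using norm_sum[of "\<lambda>i. fst (s i)" "{..<T}"]
    by (simp add: divide_right_mono)
  also have "\<dots> \<le> (1 / real T) * real T"
    using assms sum_mono[of "{..<T}" "\<lambda>i. norm (fst (s i))" "\<lambda>_. 1"] by (intro mult_left_mono) auto
  also have "\<dots> \<le> 1"
    by simp
  finally show ?thesis .
qed

text \<open>The term \<open>- (wstar \<bullet> mu) - e - b\<close> is the centred residual at \<open>wstar\<close>. For \<open>b = 0\<close> both
  residuals lie in the linear zone of \<open>phi R\<close>; otherwise monotonicity of \<open>phi R\<close> suffices.\<close>

lemma huber_grad_inner_ge:
  fixes x w wstar mu :: "'a::euclidean_space"
  assumes x: "norm x \<le> 1" and e: "\<bar>e\<bar> \<le> \<sigma>" and mu: "norm mu \<le> 1"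
    and w: "norm w \<le> D" and wstar: "norm wstar \<le> D" and R: "3 * D + \<sigma> \<le> R"
  defines "l \<equiv> (w - wstar) \<bullet> (x - mu)"
  shows "(if b = 0 then l\<^sup>2 else 0) + l * phi R (- (wstar \<bullet> mu) - e - b)
    \<le> huber_grad R w mu (x, wstar \<bullet> x + e + b) \<bullet> (w - wstar)"
proof -
  define r where "r = w \<bullet> (x - mu) - (wstar \<bullet> x + e + b)"
  define r0 where "r0 = - (wstar \<bullet> mu) - e - b"
  have r_diff: "r - r0 = l"
    unfolding r_def r0_def l_def by (simp add: inner_diff_left inner_diff_right)
  have lhs: "huber_grad R w mu (x, wstar \<bullet> x + e + b) \<bullet> (w - wstar) = phi R r * l"
    unfolding huber_grad_def r_def l_def by (simp add: inner_commute)
  show ?thesis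
    unfolding r0_def[symmetric] lhs
  proof (cases "b = 0")
    case True
    have "\<bar>w \<bullet> (x - mu)\<bar> \<le> 2 * D"
      using abs_inner_diff_le[OF x mu, of w] w by linarith
    moreover have "\<bar>wstar \<bullet> x\<bar> \<le> D" "\<bar>wstar \<bullet> mu\<bar> \<le> D"
      using abs_inner_le_of_norm_le[OF x, of wstar] abs_inner_le_of_norm_le[OF mu, of wstar] wstar
      by (simp_all add: inner_commute)
    ultimately have "phi R r = r" "phi R r0 = r0"
      using True e R unfolding r_def r0_def by (auto intro!: phi_eq_self)
    then show "(if b = 0 then l\<^sup>2 else 0) + l * phi R r0 \<le> phi R r * l"
      using True r_diff by (simp add: power2_eq_square algebra_simps)
  next
    case False
    then show "(if b = 0 then l\<^sup>2 else 0) + l * phi R r0 \<le> phi R r * l"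
      using phi_diff_mult_nonneg[of R r r0] r_diff by (simp add: algebra_simps)
  qed
qed

section \<open>The corrupted linear model\<close>

locale huber_regression_model =
  fixes D \<sigma> \<alpha> \<rho> :: real
    and wstar :: "'a::euclidean_space"
    and Mx :: "'a measure" and Me Mb :: "real measure"
  assumes D_pos: "D > 0" and sigma_nonneg: "\<sigma> \<ge> 0"
    and alpha: "0 \<le> \<alpha>" "\<alpha> < 1" and rho_pos: "\<rho> > 0"
    and wstar: "norm wstar \<le> D"
    and Mx: "prob_space Mx" "sets Mx = sets borel"
    and Me: "prob_space Me" "sets Me = sets borel"
    and Mb: "prob_space Mb" "sets Mb = sets borel"
    and x_bdd: "AE x in Mx. norm x \<le> 1"
    and cov: "\<forall>v. cov_form Mx v v \<ge> \<rho> * (v \<bullet> v)"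
    and eps_bdd: "AE e in Me. \<bar>e\<bar> \<le> \<sigma>"
    and b_prob: "measure Mb {b. b \<noteq> 0} = \<alpha>"
begin

abbreviation "R \<equiv> 6 * D + \<sigma>"
abbreviation "lam \<equiv> (1 - \<alpha>) * \<rho>"
abbreviation "sample \<equiv> sample_law wstar Mx Me Mb"

definition "noise = Me \<Otimes>\<^sub>M Mb"
definition "triples = Mx \<Otimes>\<^sub>M noise"
definition "observe = (\<lambda>(x, e, b). (x, wstar \<bullet> x + e + b))"
definition "m = (\<integral>x. x \<partial>Mx)"

declare Mx(2)[measurable_cong] Me(2)[measurable_cong] Mb(2)[measurable_cong]

lemma R_pos: "R > 0"
  using D_pos sigma_nonneg by simp

lemma lam_pos: "lam > 0"
  using alpha rho_pos by simp

lemma prob_space_noise: "prob_space noise"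
  unfolding noise_def using Me(1) Mb(1) by (rule prob_space_pair)

lemma prob_space_triples: "prob_space triples"
  unfolding triples_def using Mx(1) prob_space_noise by (rule prob_space_pair)

lemma sets_triples: "sets triples = sets (borel :: ('a \<times> real \<times> real) measure)"
proof -
  have "sets triples = sets (borel \<Otimes>\<^sub>M (borel \<Otimes>\<^sub>M borel) :: ('a \<times> real \<times> real) measure)"
    unfolding triples_def noise_def by (intro sets_pair_measure_cong Mx Me Mb)
  then show ?thesis
    by (simp only: borel_prod)
qed

lemma observe_measurable: "observe \<in> measurable triples borel"
proof -
  have "continuous_on UNIV observe"
    unfolding observe_def case_prod_unfold by (intro continuous_intros)
  then show ?thesis
    by (simp add: measurable_cong_sets[OF sets_triples refl] borel_measurable_continuous_onI)
qed

lemma sample_eq: "sample = distr triples borel observe"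
  unfolding sample_law_def triples_def noise_def observe_def ..

lemma prob_space_sample: "prob_space sample"
  unfolding sample_eq using prob_space_triples observe_measurable by (rule prob_space.prob_space_distr)

lemma sets_sample: "sets sample = sets borel"
  by (simp add: sample_eq)

lemma sets_sample_pair [measurable_cong]: "sets sample = sets (borel \<Otimes>\<^sub>M borel)"
  unfolding sets_sample borel_prod ..

lemma distr_triples_fst: "distr triples Mx fst = Mx"
  unfolding triples_def using prob_space_noise by (rule prob_space.distr_pair_fst)

lemma AE_triples: "AE z in triples. norm (fst z) \<le> 1 \<and> \<bar>fst (snd z)\<bar> \<le> \<sigma>"
proof -
  have "AE x in distr triples Mx fst. norm x \<le> 1"
    unfolding distr_triples_fst by (rule x_bdd)
  then have "AE z in triples. norm (fst z) \<le> 1"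
    by (rule AE_distrD[rotated]) (simp add: triples_def)
  have "AE e in distr noise Me fst. \<bar>e\<bar> \<le> \<sigma>"
    unfolding noise_def prob_space.distr_pair_fst[OF Mb(1)] by (rule eps_bdd)
  then have "AE z in noise. \<bar>fst z\<bar> \<le> \<sigma>"
    by (rule AE_distrD[rotated]) (simp add: noise_def)
  interpret pair_sigma_finite Mx noise
    using Mx(1) prob_space_noise by (simp add: pair_sigma_finite_def prob_space_imp_sigma_finite)
  have "AE z in triples. \<bar>fst (snd z)\<bar> \<le> \<sigma>"
    unfolding triples_def
  proof (rule AE_pair_measure)
    show "{z \<in> space (Mx \<Otimes>\<^sub>M noise). \<bar>fst (snd z)\<bar> \<le> \<sigma>} \<in> sets (Mx \<Otimes>\<^sub>M noise)"
      unfolding noise_def by measurable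
    show "AE x in Mx. AE y in noise. \<bar>fst (snd (x, y))\<bar> \<le> \<sigma>"
      using \<open>AE z in noise. \<bar>fst z\<bar> \<le> \<sigma>\<close> by simp
  qed
  with \<open>AE z in triples. norm (fst z) \<le> 1\<close> show ?thesis
    by eventually_elim auto
qed

lemma measurable_projW [measurable]: "projW D \<in> borel_measurable borel"
  using D_pos by simp

lemma integrable_Mx:
  fixes f :: "'a \<Rightarrow> 'b::{banach,second_countable_topology}"
  assumes "f \<in> borel_measurable borel" "\<And>x. norm x \<le> 1 \<Longrightarrow> norm (f x) \<le> B"
  shows "integrable Mx f"
  using prob_space.finite_measure[OF Mx(1)] _ x_bdd assms(2)
  by (rule integrable_bounded_AE) (use assms(1) in \<open>simp add: measurable_cong_sets[OF Mx(2) refl]\<close>)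

lemma integrable_triples:
  fixes f :: "'a \<times> real \<times> real \<Rightarrow> 'b::{banach,second_countable_topology}"
  assumes "f \<in> borel_measurable triples" "\<And>z. norm (fst z) \<le> 1 \<Longrightarrow> norm (f z) \<le> B"
  shows "integrable triples f"
  using prob_space.finite_measure[OF prob_space_triples] assms(1) AE_triples assms(2)
  by (rule integrable_bounded_AE) auto

lemma norm_m_le: "norm m \<le> 1"
proof -
  interpret prob_space Mx by (fact Mx(1))
  have int: "integrable Mx (\<lambda>x. x)"
    by (rule integrable_Mx[of _ 1]) auto
  have "norm m \<le> (\<integral>x. norm x \<partial>Mx)"
    unfolding m_def by (rule integral_norm_bound)
  also have "\<dots> \<le> 1"
    using x_bdd int by (intro integral_le_const) auto
  finally show ?thesis .
qed

lemma second_moment_ge: "\<rho> * (norm v)\<^sup>2 \<le> (\<integral>x. (v \<bullet> (x - c))\<^sup>2 \<partial>Mx)"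
proof -
  have "integrable Mx (\<lambda>x. x)"
    by (rule integrable_Mx[of _ 1]) auto
  moreover have "integrable Mx (\<lambda>x. (v \<bullet> x)\<^sup>2)"
  proof (rule integrable_Mx[of _ "(norm v)\<^sup>2"])
    fix x :: 'a
    assume "norm x \<le> 1"
    then have "\<bar>v \<bullet> x\<bar> \<le> norm v"
      using Cauchy_Schwarz_ineq2[of v x] mult_left_le[of "norm x" "norm v"] by simp
    then show "norm ((v \<bullet> x)\<^sup>2) \<le> (norm v)\<^sup>2"
      using power_mono[of "\<bar>v \<bullet> x\<bar>" "norm v" 2] by simp
  qed simp
  ultimately have "(\<integral>x. (v \<bullet> (x - c))\<^sup>2 \<partial>Mx) = cov_form Mx v v + (v \<bullet> (m - c))\<^sup>2"
    unfolding m_def by (rule second_moment_eq_cov_form[OF Mx(1)])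
  moreover have "\<rho> * (norm v)\<^sup>2 \<le> cov_form Mx v v"
    using cov by (simp add: power2_norm_eq_inner)
  ultimately show ?thesis
    using zero_le_power2[of "v \<bullet> (m - c)"] by linarith
qed

lemma AE_sample: "AE y in sample. norm (fst y) \<le> 1"
proof -
  have "closed {y :: 'a \<times> real. norm (fst y) \<le> 1}"
    by (intro closed_Collect_le continuous_intros)
  then have "{y \<in> space borel. norm (fst y) \<le> (1::real)} \<in> sets (borel :: ('a \<times> real) measure)"
    by simp
  with AE_triples show ?thesis
    unfolding sample_eq by (subst AE_distr_iff[OF observe_measurable]) (auto simp: observe_def split: prod.splits)
qed

lemma integral_sample_fst: "(\<integral>y. fst y \<partial>sample) = m"
proof -
  have "(\<integral>y. fst y \<partial>sample) = (\<integral>z. fst z \<partial>triples)"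
    unfolding sample_eq integral_distr[OF observe_measurable fst_borel_measurable]
    by (simp add: observe_def case_prod_unfold)
  also have "\<dots> = (\<integral>x. x \<partial>distr triples Mx fst)"
    by (subst integral_distr) (auto simp: triples_def)
  finally show ?thesis
    by (simp add: distr_triples_fst m_def)
qed

lemma integral_indicator_b_eq_0: "(\<integral>y. indicator {0} (snd y) \<partial>noise) = 1 - \<alpha>"
proof -
  interpret pair_sigma_finite Me Mb
    using Me(1) Mb(1) by (simp add: pair_sigma_finite_def prob_space_imp_sigma_finite)
  interpret Mb: prob_space Mb by (fact Mb(1))
  have "integrable noise (\<lambda>y. indicator {0} (snd y) :: real)"
    using prob_space.finite_measure[OF prob_space_noise]
    by (rule integrable_bounded_AE[where P = "\<lambda>_. True" and B = 1]) (auto simp: noise_def)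
  then have "(\<integral>y. indicator {0} (snd y) \<partial>noise) = measure Mb {0}"
    using integral_fst_mult_snd[of "\<lambda>_. 1" "indicator {0}"]
    by (simp add: noise_def prob_space.prob_space[OF Me(1)])
  also have "\<dots> = measure Mb (space Mb - {b. b \<noteq> 0})"
    using sets_eq_imp_space_eq[OF Mb(2)] by (intro arg_cong[where f = "measure Mb"]) auto
  also have "\<dots> = 1 - \<alpha>"
    using b_prob Mb.prob_compl[of "{b. b \<noteq> 0}"] by simp
  finally show ?thesis .
qed

lemma abs_integral_noise_phi_le: "\<bar>\<integral>y. phi R (c - fst y - snd y) \<partial>noise\<bar> \<le> R"
proof -
  interpret prob_space noise by (fact prob_space_noise)
  have "\<bar>\<integral>y. phi R (c - fst y - snd y) \<partial>noise\<bar> \<le> (\<integral>y. \<bar>phi R (c - fst y - snd y)\<bar> \<partial>noise)"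
    by (rule integral_abs_bound)
  also have "\<dots> \<le> R"
  proof (rule integral_le_const)
    have "(\<lambda>y. \<bar>phi R (c - fst y - snd y)\<bar>) \<in> borel_measurable noise"
      unfolding noise_def phi_def by measurable
    then show "integrable noise (\<lambda>y. \<bar>phi R (c - fst y - snd y)\<bar>)"
      using finite_measure_axioms
      by (intro integrable_bounded_AE[where P = "\<lambda>_. True" and B = R])
        (auto simp: abs_phi_le R_pos less_imp_le)
  qed (simp add: abs_phi_le R_pos less_imp_le)
  finally show ?thesis .
qed

lemma integral_Mx_inner: "(\<integral>x. v \<bullet> (x - c) \<partial>Mx) = v \<bullet> (m - c)"
proof -
  interpret Mx: prob_space Mx by (fact Mx(1))
  have int: "integrable Mx (\<lambda>x. x)"
    by (rule integrable_Mx[of _ 1]) auto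
  have "(\<integral>x. v \<bullet> (x - c) \<partial>Mx) = (\<integral>x. v \<bullet> x \<partial>Mx) - (\<integral>x. v \<bullet> c \<partial>Mx)"
    unfolding inner_diff_right using int by (intro Bochner_Integration.integral_diff) auto
  also have "\<dots> = v \<bullet> (m - c)"
    unfolding m_def integral_inner_right[OF int] by (simp add: inner_diff_right Mx.prob_space)
  finally show ?thesis .
qed

lemma
  assumes mu: "norm mu \<le> 1"
  shows integrable_clean_term:
      "integrable triples (\<lambda>z. (v \<bullet> (fst z - mu))\<^sup>2 * indicator {0} (snd (snd z)))"
    and clean_term_ge:
      "lam * (norm v)\<^sup>2 \<le> (\<integral>z. (v \<bullet> (fst z - mu))\<^sup>2 * indicator {0} (snd (snd z)) \<partial>triples)"
proof -
  interpret pair_sigma_finite Mx noise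
    using Mx(1) prob_space_noise by (simp add: pair_sigma_finite_def prob_space_imp_sigma_finite)
  show int: "integrable triples (\<lambda>z. (v \<bullet> (fst z - mu))\<^sup>2 * indicator {0} (snd (snd z)))"
  proof (rule integrable_triples[of _ "(2 * norm v)\<^sup>2"])
    fix z :: "'a \<times> real \<times> real"
    assume "norm (fst z) \<le> 1"
    then show "norm ((v \<bullet> (fst z - mu))\<^sup>2 * indicator {0} (snd (snd z))) \<le> (2 * norm v)\<^sup>2"
      using abs_inner_diff_le[OF _ mu, of "fst z" v] power_mono[of "\<bar>v \<bullet> (fst z - mu)\<bar>" "2 * norm v" 2]
      by (simp add: indicator_def)
  qed (simp add: triples_def noise_def)
  have "(\<integral>z. (v \<bullet> (fst z - mu))\<^sup>2 * indicator {0} (snd (snd z)) \<partial>triples)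
      = (\<integral>x. (v \<bullet> (x - mu))\<^sup>2 \<partial>Mx) * (1 - \<alpha>)"
    using int integral_fst_mult_snd[of "\<lambda>x. (v \<bullet> (x - mu))\<^sup>2" "\<lambda>y. indicator {0} (snd y)"]
    by (simp add: triples_def integral_indicator_b_eq_0)
  also have "\<dots> \<ge> \<rho> * (norm v)\<^sup>2 * (1 - \<alpha>)"
    using second_moment_ge[of v mu] alpha by (intro mult_right_mono) auto
  finally show "lam * (norm v)\<^sup>2 \<le> (\<integral>z. (v \<bullet> (fst z - mu))\<^sup>2 * indicator {0} (snd (snd z)) \<partial>triples)"
    by (simp add: algebra_simps)
qed

lemma
  assumes mu: "norm mu \<le> 1"
  shows integrable_noise_term:
      "integrable triples (\<lambda>z. v \<bullet> (fst z - mu) * phi R (c - fst (snd z) - snd (snd z)))"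
    and noise_term_ge:
      "- (R * norm v * norm (m - mu))
        \<le> (\<integral>z. v \<bullet> (fst z - mu) * phi R (c - fst (snd z) - snd (snd z)) \<partial>triples)"
proof -
  interpret pair_sigma_finite Mx noise
    using Mx(1) prob_space_noise by (simp add: pair_sigma_finite_def prob_space_imp_sigma_finite)
  show int: "integrable triples (\<lambda>z. v \<bullet> (fst z - mu) * phi R (c - fst (snd z) - snd (snd z)))"
  proof (rule integrable_triples[of _ "2 * norm v * R"])
    show "(\<lambda>z. v \<bullet> (fst z - mu) * phi R (c - fst (snd z) - snd (snd z))) \<in> borel_measurable triples"
      unfolding triples_def noise_def phi_def by measurable
    fix z :: "'a \<times> real \<times> real"
    assume "norm (fst z) \<le> 1"
    then show "norm (v \<bullet> (fst z - mu) * phi R (c - fst (snd z) - snd (snd z))) \<le> 2 * norm v * R"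
      using abs_inner_diff_le[OF _ mu, of "fst z" v] abs_phi_le R_pos
      unfolding abs_mult real_norm_def by (intro mult_mono) (auto simp: less_imp_le)
  qed
  have "(\<integral>z. v \<bullet> (fst z - mu) * phi R (c - fst (snd z) - snd (snd z)) \<partial>triples)
      = v \<bullet> (m - mu) * (\<integral>y. phi R (c - fst y - snd y) \<partial>noise)"
    using int integral_fst_mult_snd[of "\<lambda>x. v \<bullet> (x - mu)" "\<lambda>y. phi R (c - fst y - snd y)"]
    by (simp add: triples_def integral_Mx_inner)
  moreover have "\<bar>v \<bullet> (m - mu) * (\<integral>y. phi R (c - fst y - snd y) \<partial>noise)\<bar> \<le> norm v * norm (m - mu) * R"
    unfolding abs_mult using abs_integral_noise_phi_le[of c]
    by (intro mult_mono Cauchy_Schwarz_ineq2) auto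
  ultimately show "- (R * norm v * norm (m - mu))
      \<le> (\<integral>z. v \<bullet> (fst z - mu) * phi R (c - fst (snd z) - snd (snd z)) \<partial>triples)"
    by (simp add: abs_le_iff algebra_simps)
qed

lemma expected_descent:
  assumes w: "norm w \<le> D" and mu: "norm mu \<le> 1"
  shows "lam * (norm (w - wstar))\<^sup>2 - R * norm (w - wstar) * norm (m - mu)
    \<le> (\<integral>y. huber_grad R w mu y \<bullet> (w - wstar) \<partial>sample)"
proof -
  define v where "v = w - wstar"
  define F where "F z = (v \<bullet> (fst z - mu))\<^sup>2 * indicator {0} (snd (snd z))
    + v \<bullet> (fst z - mu) * phi R (- (wstar \<bullet> mu) - fst (snd z) - snd (snd z))" for z :: "'a \<times> real \<times> real"
  have grad_meas: "(\<lambda>y. huber_grad R w mu y \<bullet> v) \<in> borel_measurable borel"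
    by (intro borel_measurable_continuous_onI continuous_intros)
  have int_grad: "integrable triples (\<lambda>z. huber_grad R w mu (observe z) \<bullet> v)"
  proof (rule integrable_triples[of _ "2 * R * norm v"])
    show "(\<lambda>z. huber_grad R w mu (observe z) \<bullet> v) \<in> borel_measurable triples"
      using measurable_comp[OF observe_measurable grad_meas] by (simp add: comp_def)
    fix z :: "'a \<times> real \<times> real"
    assume "norm (fst z) \<le> 1"
    then have "norm (huber_grad R w mu (observe z)) \<le> 2 * R"
      using R_pos mu by (intro norm_huber_grad_le) (auto simp: observe_def split: prod.splits)
    then show "norm (huber_grad R w mu (observe z) \<bullet> v) \<le> 2 * R * norm v"
      unfolding real_norm_def by (rule abs_inner_le_of_norm_le)
  qed
  have "AE z in triples. F z \<le> huber_grad R w mu (observe z) \<bullet> v"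
    using AE_triples
  proof eventually_elim
    case (elim z)
    obtain x e b where z: "z = (x, e, b)"
      by (cases z) auto
    show ?case
      using elim huber_grad_inner_ge[of x e \<sigma> mu w D wstar R b] mu w wstar D_pos
      by (cases "b = 0") (simp_all add: z F_def observe_def v_def)
  qed
  then have "(\<integral>z. F z \<partial>triples) \<le> (\<integral>z. huber_grad R w mu (observe z) \<bullet> v \<partial>triples)"
    using integrable_clean_term[OF mu] integrable_noise_term[OF mu] int_grad
    by (intro integral_mono_AE) (auto simp: F_def)
  also have "\<dots> = (\<integral>y. huber_grad R w mu y \<bullet> v \<partial>sample)"
    unfolding sample_eq by (rule integral_distr[symmetric, OF observe_measurable grad_meas])
  finally show ?thesis
    using integrable_clean_term[OF mu] integrable_noise_term[OF mu]
      clean_term_ge[OF mu, of v] noise_term_ge[OF mu, of v "- (wstar \<bullet> mu)"]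
    by (simp add: F_def v_def)
qed

lemma integrable_sample:
  fixes f :: "'a \<times> real \<Rightarrow> 'b::{banach,second_countable_topology}"
  assumes "f \<in> borel_measurable borel" "\<And>y. norm (fst y) \<le> 1 \<Longrightarrow> norm (f y) \<le> B"
  shows "integrable sample f"
  using prob_space.finite_measure[OF prob_space_sample] _ AE_sample assms(2)
  by (rule integrable_bounded_AE) (use assms(1) in \<open>simp add: measurable_cong_sets[OF sets_sample refl]\<close>)

lemma
  assumes mu: "norm mu \<le> 1"
  shows integrable_huber_grad_inner: "integrable sample (\<lambda>y. huber_grad R w mu y \<bullet> v)"
    and integrable_sq_huber_grad: "integrable sample (\<lambda>y. (norm (huber_grad R w mu y))\<^sup>2)"
    and expected_sq_huber_grad_le: "(\<integral>y. (norm (huber_grad R w mu y))\<^sup>2 \<partial>sample) \<le> 4 * R\<^sup>2"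
proof -
  interpret sample: prob_space sample by (fact prob_space_sample)
  have g_bnd: "norm (huber_grad R w mu y) \<le> 2 * R" if "norm (fst y) \<le> 1" for y
    using R_pos mu that by (intro norm_huber_grad_le) auto
  show "integrable sample (\<lambda>y. huber_grad R w mu y \<bullet> v)"
  proof (rule integrable_sample[of _ "2 * R * norm v"])
    show "(\<lambda>y. huber_grad R w mu y \<bullet> v) \<in> borel_measurable borel"
      by (intro borel_measurable_continuous_onI continuous_intros)
    fix y :: "'a \<times> real"
    assume "norm (fst y) \<le> 1"
    then show "norm (huber_grad R w mu y \<bullet> v) \<le> 2 * R * norm v"
      unfolding real_norm_def using g_bnd by (intro abs_inner_le_of_norm_le)
  qed
  have g_sq_bnd: "(norm (huber_grad R w mu y))\<^sup>2 \<le> 4 * R\<^sup>2" if "norm (fst y) \<le> 1" for y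
  proof -
    have "(norm (huber_grad R w mu y))\<^sup>2 \<le> (2 * R)\<^sup>2"
      using g_bnd[OF that] by (intro power_mono) auto
    then show ?thesis
      by (simp only: power_mult_distrib) simp
  qed
  show int_sq: "integrable sample (\<lambda>y. (norm (huber_grad R w mu y))\<^sup>2)"
  proof (rule integrable_sample[of _ "4 * R\<^sup>2"])
    show "(\<lambda>y. (norm (huber_grad R w mu y))\<^sup>2) \<in> borel_measurable borel"
      by (intro borel_measurable_continuous_onI continuous_intros)
  qed (simp add: g_sq_bnd)
  show "(\<integral>y. (norm (huber_grad R w mu y))\<^sup>2 \<partial>sample) \<le> 4 * R\<^sup>2"
    using AE_sample int_sq g_sq_bnd by (intro sample.integral_le_const) (auto elim!: eventually_mono)
qed

lemma expected_step_le:
  assumes w: "norm w \<le> D" and mu: "norm mu \<le> 1" and eta: "0 \<le> eta"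
  shows "(\<integral>\<^sup>+ y. ennreal ((norm (projW D (w - eta *\<^sub>R huber_grad R w mu y) - wstar))\<^sup>2) \<partial>sample)
    \<le> ennreal ((norm (w - wstar))\<^sup>2
        - 2 * eta * (lam * (norm (w - wstar))\<^sup>2 - R * norm (w - wstar) * norm (m - mu))
        + eta\<^sup>2 * (4 * R\<^sup>2))"
proof -
  interpret sample: prob_space sample by (fact prob_space_sample)
  define v where "v = w - wstar"
  define g where "g = huber_grad R w mu"
  have int_inner: "integrable sample (\<lambda>y. g y \<bullet> v)" and int_sq: "integrable sample (\<lambda>y. (norm (g y))\<^sup>2)"
    unfolding g_def using mu by (rule integrable_huber_grad_inner integrable_sq_huber_grad)+
  have "(\<integral>\<^sup>+ y. ennreal ((norm (projW D (w - eta *\<^sub>R g y) - wstar))\<^sup>2) \<partial>sample)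
      \<le> (\<integral>\<^sup>+ y. ennreal ((norm v)\<^sup>2 - 2 * eta * (g y \<bullet> v) + eta\<^sup>2 * (norm (g y))\<^sup>2) \<partial>sample)"
  proof (rule nn_integral_mono)
    fix y
    have "norm (projW D (w - eta *\<^sub>R g y) - wstar) \<le> norm (v - eta *\<^sub>R g y)"
      using norm_projW_diff_le[OF wstar, of "w - eta *\<^sub>R g y"] by (simp add: v_def algebra_simps)
    then show "ennreal ((norm (projW D (w - eta *\<^sub>R g y) - wstar))\<^sup>2)
        \<le> ennreal ((norm v)\<^sup>2 - 2 * eta * (g y \<bullet> v) + eta\<^sup>2 * (norm (g y))\<^sup>2)"
      unfolding norm_diff_scaleR_sq[symmetric] by (intro ennreal_leI power_mono) auto
  qed
  also have "\<dots> = ennreal (\<integral>y. (norm v)\<^sup>2 - 2 * eta * (g y \<bullet> v) + eta\<^sup>2 * (norm (g y))\<^sup>2 \<partial>sample)"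
  proof (rule nn_integral_eq_integral)
    show "integrable sample (\<lambda>y. (norm v)\<^sup>2 - 2 * eta * (g y \<bullet> v) + eta\<^sup>2 * (norm (g y))\<^sup>2)"
      using int_inner int_sq by simp
  qed (simp flip: norm_diff_scaleR_sq)
  also have "\<dots> \<le> ennreal ((norm v)\<^sup>2 - 2 * eta * (lam * (norm v)\<^sup>2 - R * norm v * norm (m - mu))
      + eta\<^sup>2 * (4 * R\<^sup>2))"
  proof (rule ennreal_leI)
    have "2 * eta * (lam * (norm v)\<^sup>2 - R * norm v * norm (m - mu)) \<le> 2 * eta * (\<integral>y. g y \<bullet> v \<partial>sample)"
      using expected_descent[OF w mu] eta unfolding g_def v_def by (intro mult_left_mono) auto
    moreover have "eta\<^sup>2 * (\<integral>y. (norm (g y))\<^sup>2 \<partial>sample) \<le> eta\<^sup>2 * (4 * R\<^sup>2)"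
      using expected_sq_huber_grad_le[OF mu] unfolding g_def by (intro mult_left_mono) auto
    ultimately show "(\<integral>y. (norm v)\<^sup>2 - 2 * eta * (g y \<bullet> v) + eta\<^sup>2 * (norm (g y))\<^sup>2 \<partial>sample)
        \<le> (norm v)\<^sup>2 - 2 * eta * (lam * (norm v)\<^sup>2 - R * norm v * norm (m - mu)) + eta\<^sup>2 * (4 * R\<^sup>2)"
      using int_inner int_sq by (simp add: sample.prob_space)
  qed
  finally show ?thesis
    unfolding g_def v_def .
qed

end

section \<open>Convergence of the averaged iterate\<close>

locale huber_sgd = huber_regression_model +
  fixes T :: nat
  assumes T_pos: "T > 0" and T_even: "even T"
begin

abbreviation "P \<equiv> Pi\<^sub>M {..<2 * T} (\<lambda>_. sample)"
abbreviation "W k s \<equiv> sgd_iter D R lam T s k"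
abbreviation "mu_hat s \<equiv> phase1_mean T s"

definition "sq_err k = (\<integral>s. (norm (W k s - wstar))\<^sup>2 \<partial>P)"

lemma product_prob_space_sample: "product_prob_space (\<lambda>_. sample)"
  using prob_space_sample by (rule product_prob_space_const)

lemma measurable_mu_hat [measurable]:
  "{..<T} \<subseteq> I \<Longrightarrow> mu_hat \<in> borel_measurable (Pi\<^sub>M I (\<lambda>_. sample))"
  unfolding phase1_mean_def by measurable auto

lemma measurable_W:
  "{..<T + k} \<subseteq> I \<Longrightarrow> W k \<in> borel_measurable (Pi\<^sub>M I (\<lambda>_. sample))"
proof (induction k)
  case (Suc k)
  then have [measurable]: "T + k \<in> I" "{..<T} \<subseteq> I"
    by auto
  have "{..<T + k} \<subseteq> I"
    using Suc.prems by auto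
  with Suc.IH have [measurable]: "W k \<in> borel_measurable (Pi\<^sub>M I (\<lambda>_. sample))" .
  show ?case
    unfolding sgd_iter_Suc' huber_grad_def phi_def by measurable
qed simp

lemma AE_norm_mu_hat_le:
  assumes "{..<T} \<subseteq> I"
  shows "AE s in Pi\<^sub>M I (\<lambda>_. sample). norm (mu_hat s) \<le> 1"
proof -
  have "AE s in Pi\<^sub>M I (\<lambda>_. sample). \<forall>i\<in>{..<T}. norm (fst (s i)) \<le> 1"
    using assms AE_sample prob_space_sample
    by (intro AE_finite_allI AE_PiM_component[where P = "\<lambda>y. norm (fst y) \<le> 1"]) auto
  then show ?thesis
    by eventually_elim (simp add: norm_phase1_mean_le)
qed

lemma
  shows integrable_mu_hat_sq_err: "integrable P (\<lambda>s. (norm (mu_hat s - m))\<^sup>2)"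
    and mu_hat_variance_le: "(\<integral>s. (norm (mu_hat s - m))\<^sup>2 \<partial>P) \<le> 4 / real T"
proof -
  have "AE y in sample. norm (fst y - m) \<le> 2"
    using AE_sample
  proof eventually_elim
    case (elim y)
    then show ?case
      using norm_m_le norm_triangle_ineq4[of "fst y" m] by linarith
  qed
  then have bnd: "AE y in sample. norm (fst y - (\<integral>y. fst y \<partial>sample)) \<le> 2"
    by (simp add: integral_sample_fst)
  have meas: "fst \<in> borel_measurable sample"
    using fst_borel_measurable by simp
  show "integrable P (\<lambda>s. (norm (mu_hat s - m))\<^sup>2)"
    using integrable_empirical_mean_sq_err[OF prob_space_sample meas bnd, of "{..<2 * T}" T] T_pos
    by (simp add: phase1_mean_def integral_sample_fst)
  show "(\<integral>s. (norm (mu_hat s - m))\<^sup>2 \<partial>P) \<le> 4 / real T"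
    using empirical_mean_variance_le[OF prob_space_sample meas bnd, of "{..<2 * T}" T] T_pos
    by (simp add: phase1_mean_def integral_sample_fst)
qed

lemma integrable_sq_err:
  assumes "k \<le> T"
  shows "integrable P (\<lambda>s. (norm (W k s - wstar))\<^sup>2)"
proof -
  interpret P: prob_space P
    using prob_space_sample by (intro prob_space_PiM)
  have "W k \<in> borel_measurable P"
    using assms by (intro measurable_W) auto
  moreover have "(norm (W k s - wstar))\<^sup>2 \<le> (2 * D)\<^sup>2" for s
    using norm_sgd_iter_le[of D R lam T s k] D_pos wstar norm_triangle_ineq4[of "W k s" wstar]
    by (intro power_mono) auto
  ultimately show ?thesis
    by (intro P.integrable_const_bound[of _ "(2 * D)\<^sup>2"]) auto
qed

lemma conditional_sq_err_Suc_le: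
  fixes k :: nat
  assumes mu: "norm (mu_hat x) \<le> 1"
  defines "t \<equiv> real (Suc k)"
  shows "(\<integral>\<^sup>+ y. ennreal ((norm (W (Suc k) (x(T + k := y)) - wstar))\<^sup>2) \<partial>sample)
    \<le> ennreal ((1 - 1 / t) * (norm (W k x - wstar))\<^sup>2
        + R\<^sup>2 / lam\<^sup>2 / t * (norm (mu_hat x - m))\<^sup>2 + 4 * (R\<^sup>2 / lam\<^sup>2) / t\<^sup>2)"
proof -
  have t_pos: "t > 0"
    by (simp add: t_def)
  have "W k (x(T + k := y)) = W k x" "mu_hat (x(T + k := y)) = mu_hat x" for y
    by (auto intro!: sgd_iter_cong phase1_mean_cong)
  then have "W (Suc k) (x(T + k := y)) = projW D (W k x - (1 / (lam * t)) *\<^sub>R huber_grad R (W k x) (mu_hat x) y)" for y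
    unfolding sgd_iter_Suc' by (simp add: t_def)
  then have "(\<integral>\<^sup>+ y. ennreal ((norm (W (Suc k) (x(T + k := y)) - wstar))\<^sup>2) \<partial>sample)
      = (\<integral>\<^sup>+ y. ennreal ((norm (projW D (W k x - (1 / (lam * t)) *\<^sub>R huber_grad R (W k x) (mu_hat x) y)
          - wstar))\<^sup>2) \<partial>sample)"
    by simp
  also have "\<dots> \<le> ennreal ((norm (W k x - wstar))\<^sup>2 - 2 * (1 / (lam * t)) * (lam * (norm (W k x - wstar))\<^sup>2
      - R * norm (W k x - wstar) * norm (m - mu_hat x)) + (1 / (lam * t))\<^sup>2 * (4 * R\<^sup>2))"
    using D_pos lam_pos mu unfolding t_def by (intro expected_step_le norm_sgd_iter_le) auto
  also have "\<dots> \<le> ennreal ((1 - 1 / t) * (norm (W k x - wstar))\<^sup>2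
      + R\<^sup>2 / lam\<^sup>2 / t * (norm (mu_hat x - m))\<^sup>2 + 4 * (R\<^sup>2 / lam\<^sup>2) / t\<^sup>2)"
    using sgd_step_bound_le[OF lam_pos t_pos, of "norm (W k x - wstar)" R "norm (m - mu_hat x)"]
    by (intro ennreal_leI) (simp only: norm_minus_commute[of "mu_hat x" m])
  finally show ?thesis .
qed

lemma nn_integral_sq_err_Suc_le:
  assumes k: "k < T"
  defines "t \<equiv> real (Suc k)"
  shows "(\<integral>\<^sup>+ s. ennreal ((norm (W (Suc k) s - wstar))\<^sup>2) \<partial>P)
    \<le> (\<integral>\<^sup>+ s. ennreal ((1 - 1 / t) * (norm (W k s - wstar))\<^sup>2
        + R\<^sup>2 / lam\<^sup>2 / t * (norm (mu_hat s - m))\<^sup>2 + 4 * (R\<^sup>2 / lam\<^sup>2) / t\<^sup>2) \<partial>P)"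
proof -
  interpret product_prob_space "\<lambda>_. sample" "{..<2 * T}"
    by (rule product_prob_space_sample)
  define I where "I = {..<2 * T} - {T + k}"
  have I: "finite I" "T + k \<notin> I" "insert (T + k) I = {..<2 * T}" "{..<T} \<subseteq> I"
    using k by (auto simp: I_def)
  have [measurable]: "W k \<in> borel_measurable P" "W (Suc k) \<in> borel_measurable P"
    "mu_hat \<in> borel_measurable P"
    by (rule measurable_W measurable_mu_hat; use k in auto)+
  have upd: "W k (x(T + k := y)) = W k x" "mu_hat (x(T + k := y)) = mu_hat x"
    for x :: "nat \<Rightarrow> 'a \<times> real" and y
    by (auto intro!: sgd_iter_cong phase1_mean_cong)
  show ?thesis
    unfolding I(3)[symmetric]
  proof (rule nn_integral_insert_le_of_fresh[OF I(1,2)])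
    show "AE x in Pi\<^sub>M I (\<lambda>_. sample).
        (\<integral>\<^sup>+ y. ennreal ((norm (W (Suc k) (x(T + k := y)) - wstar))\<^sup>2) \<partial>sample)
        \<le> ennreal ((1 - 1 / t) * (norm (W k x - wstar))\<^sup>2
          + R\<^sup>2 / lam\<^sup>2 / t * (norm (mu_hat x - m))\<^sup>2 + 4 * (R\<^sup>2 / lam\<^sup>2) / t\<^sup>2)"
      using AE_norm_mu_hat_le[OF I(4)] unfolding t_def
      by eventually_elim (rule conditional_sq_err_Suc_le)
  qed (unfold I(3), measurable, measurable, simp add: upd)
qed

lemma sq_err_Suc_le:
  assumes k: "k < T"
  defines "t \<equiv> real (Suc k)" and "C \<equiv> R\<^sup>2 / lam\<^sup>2"
  shows "sq_err (Suc k) \<le> (1 - 1 / t) * sq_err k + (4 * C / real T) / t + 4 * C / t\<^sup>2"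
proof -
  interpret P: prob_space P
    using prob_space_sample by (intro prob_space_PiM)
  have t: "t > 0" "1 - 1 / t \<ge> 0"
    by (simp_all add: t_def field_simps)
  have C: "C \<ge> 0"
    by (simp add: C_def)
  define V where "V = (\<integral>s. (norm (mu_hat s - m))\<^sup>2 \<partial>P)"
  define bound where "bound = (\<lambda>s. (1 - 1 / t) * (norm (W k s - wstar))\<^sup>2
    + C / t * (norm (mu_hat s - m))\<^sup>2 + 4 * C / t\<^sup>2)"
  have int_k: "integrable P (\<lambda>s. (norm (W k s - wstar))\<^sup>2)"
    using k by (intro integrable_sq_err) auto
  have int_Suc: "integrable P (\<lambda>s. (norm (W (Suc k) s - wstar))\<^sup>2)"
    by (rule integrable_sq_err) (use k in auto)
  have int_bound: "integrable P bound"
    using int_k integrable_mu_hat_sq_err by (simp add: bound_def)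
  have "ennreal (sq_err (Suc k)) = (\<integral>\<^sup>+ s. ennreal ((norm (W (Suc k) s - wstar))\<^sup>2) \<partial>P)"
    unfolding sq_err_def using int_Suc by (intro nn_integral_eq_integral[symmetric]) auto
  also have "\<dots> \<le> (\<integral>\<^sup>+ s. ennreal (bound s) \<partial>P)"
    using nn_integral_sq_err_Suc_le[OF k] unfolding t_def C_def bound_def .
  also have "\<dots> = ennreal (\<integral>s. bound s \<partial>P)"
    using int_bound t C by (intro nn_integral_eq_integral) (auto simp: bound_def)
  finally have "sq_err (Suc k) \<le> (\<integral>s. bound s \<partial>P)"
    using t C by (subst (asm) ennreal_le_iff) (auto simp: bound_def intro!: integral_nonneg_AE)
  also have "(\<integral>s. bound s \<partial>P) = (1 - 1 / t) * sq_err k + C / t * V + 4 * C / t\<^sup>2"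
    using int_k integrable_mu_hat_sq_err by (simp add: bound_def sq_err_def V_def P.prob_space)
  also have "C / t * V \<le> (4 * C / real T) / t"
  proof -
    have "C * V \<le> C * (4 / real T)"
      using mu_hat_variance_le C unfolding V_def by (rule mult_left_mono)
    then have "C * V / t \<le> C * (4 / real T) / t"
      using t(1) by (rule divide_right_mono[OF _ less_imp_le])
    then show ?thesis
      by (simp add: mult.commute)
  qed
  finally show ?thesis
    by simp
qed

lemma sq_err_le:
  assumes "k \<le> T"
  defines "C \<equiv> R\<^sup>2 / lam\<^sup>2"
  shows "real k * sq_err k \<le> real k * (4 * C / real T) + 4 * C * harm k"
  using assms(1) sq_err_Suc_le unfolding C_def by (intro recursion_le_harm) auto

lemma sq_err_second_half_le:
  assumes j: "T div 2 \<le> j" "j \<le> T"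
  shows "sq_err j \<le> R\<^sup>2 / lam\<^sup>2 * (12 + 8 * ln (real T)) / real T"
proof -
  define C where "C = R\<^sup>2 / lam\<^sup>2"
  have C: "C \<ge> 0"
    by (simp add: C_def)
  have T2: "real T = 2 * real (T div 2)"
    using T_even by auto
  have j_pos: "real j > 0"
    using j T_pos T_even by (auto elim!: evenE)
  have jT: "real T \<le> 2 * real j"
    using j(1) T2 by linarith
  have "harm j \<le> ln (real j) + (1::real)"
    using j_pos by (intro harm_le_ln_add_one) auto
  also have "\<dots> \<le> ln (real T) + 1"
    using j j_pos by simp
  finally have harm_j: "harm j \<le> ln (real T) + (1::real)" .
  have "4 * C * harm j \<le> 4 * C * (ln (real T) + 1)"
    using harm_j C by (intro mult_left_mono) auto
  then have "real j * sq_err j \<le> real j * (4 * C / real T) + 4 * C * (ln (real T) + 1)"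
    using sq_err_le[OF j(2)] unfolding C_def by linarith
  then have "sq_err j \<le> 4 * C / real T + 4 * C * (ln (real T) + 1) / real j"
    using j_pos by (simp add: field_simps)
  moreover have "4 * C * (ln (real T) + 1) / real j \<le> 4 * C * (ln (real T) + 1) / (real T / 2)"
    using jT j_pos T_pos C by (intro divide_left_mono mult_nonneg_nonneg) auto
  moreover have "4 * C / real T + 4 * C * (ln (real T) + 1) / (real T / 2) = C * (12 + 8 * ln (real T)) / real T"
    using T_pos by (simp add: field_simps)
  ultimately show ?thesis
    unfolding C_def by linarith
qed

lemma sq_dist_wbar_le:
  defines "S \<equiv> {T div 2 + 1..T}"
  shows "(norm (wbar D R lam T s - wstar))\<^sup>2 \<le> (\<Sum>t\<in>S. (norm (W (t - 1) s - wstar))\<^sup>2) / real (card S)"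
proof -
  have card_S: "real (card S) = real T / 2"
    unfolding S_def using T_even by (auto elim!: evenE)
  have "(1 / real (card S)) *\<^sub>R (\<Sum>t\<in>S. W (t - 1) s - wstar)
      = (2 / real T) *\<^sub>R (\<Sum>t\<in>S. W (t - 1) s) - ((2 / real T) * real (card S)) *\<^sub>R wstar"
    using T_pos by (simp add: card_S sum_subtractf scaleR_diff_right sum_constant_scaleR)
  also have "(2 / real T) * real (card S) = 1"
    using T_pos by (simp add: card_S)
  finally have "wbar D R lam T s - wstar = (1 / real (card S)) *\<^sub>R (\<Sum>t\<in>S. W (t - 1) s - wstar)"
    by (simp add: wbar_def S_def)
  moreover have "finite S" "S \<noteq> {}"
    using T_pos by (auto simp: S_def)
  ultimately show ?thesis
    using norm_mean_squared_le[of S "\<lambda>t. W (t - 1) s - wstar"] by simp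
qed

lemma average_sq_err_le:
  defines "S \<equiv> {T div 2 + 1..T}"
  shows "(\<Sum>t\<in>S. sq_err (t - 1)) / real (card S) \<le> 72 * R\<^sup>2 * (2 * ln (real T) + 1) / (lam\<^sup>2 * real T)"
proof -
  define bound where "bound = R\<^sup>2 / lam\<^sup>2 * (12 + 8 * ln (real T)) / real T"
  have "finite S" "S \<noteq> {}"
    using T_pos by (auto simp: S_def)
  moreover have "(\<Sum>t\<in>S. sq_err (t - 1)) \<le> (\<Sum>t\<in>S. bound)"
    unfolding bound_def S_def by (intro sum_mono sq_err_second_half_le) auto
  ultimately have "(\<Sum>t\<in>S. sq_err (t - 1)) / real (card S) \<le> bound"
    by (simp add: pos_divide_le_eq card_gt_0_iff mult.commute)
  also have "\<dots> \<le> R\<^sup>2 / lam\<^sup>2 * (72 * (2 * ln (real T) + 1)) / real T"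
    unfolding bound_def using T_pos by (intro divide_right_mono mult_left_mono) auto
  also have "\<dots> = 72 * R\<^sup>2 * (2 * ln (real T) + 1) / (lam\<^sup>2 * real T)"
    by (simp add: field_simps)
  finally show ?thesis .
qed

lemma nn_integral_sq_dist_wbar_le:
  defines "S \<equiv> {T div 2 + 1..T}"
  shows "(\<integral>\<^sup>+ s. ennreal ((norm (wbar D R lam T s - wstar))\<^sup>2) \<partial>P)
    \<le> ennreal ((\<Sum>t\<in>S. sq_err (t - 1)) / real (card S))"
proof -
  interpret P: prob_space P
    using prob_space_sample by (intro prob_space_PiM)
  have int: "integrable P (\<lambda>s. (norm (W (t - 1) s - wstar))\<^sup>2)" if "t \<in> S" for t
    using that by (intro integrable_sq_err) (auto simp: S_def)
  have "(\<integral>\<^sup>+ s. ennreal ((norm (wbar D R lam T s - wstar))\<^sup>2) \<partial>P)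
      \<le> (\<integral>\<^sup>+ s. ennreal ((\<Sum>t\<in>S. (norm (W (t - 1) s - wstar))\<^sup>2) / real (card S)) \<partial>P)"
    unfolding S_def by (intro nn_integral_mono ennreal_leI sq_dist_wbar_le)
  also have "\<dots> = ennreal (\<integral>s. (\<Sum>t\<in>S. (norm (W (t - 1) s - wstar))\<^sup>2) / real (card S) \<partial>P)"
    using int by (intro nn_integral_eq_integral) (auto intro!: sum_nonneg divide_nonneg_nonneg)
  also have "(\<integral>s. (\<Sum>t\<in>S. (norm (W (t - 1) s - wstar))\<^sup>2) / real (card S) \<partial>P)
      = (\<Sum>t\<in>S. sq_err (t - 1)) / real (card S)"
    using int by (simp add: sq_err_def Bochner_Integration.integral_sum)
  finally show ?thesis .
qed

end

theorem theorem3: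
  fixes D \<sigma> \<alpha> \<rho> :: real
    and T :: nat
    and wstar :: "'a::euclidean_space"
    and Mx :: "'a measure" and Me Mb :: "real measure"
  assumes D_pos: "D > 0" and sigma_nonneg: "\<sigma> \<ge> 0"
    and alpha: "0 \<le> \<alpha>" "\<alpha> < 1" and rho_pos: "\<rho> > 0"
    and T_pos: "T > 0" and T_even: "even T"
    and wstar: "norm wstar \<le> D"
    and Mx: "prob_space Mx" "sets Mx = sets borel"
    and Me: "prob_space Me" "sets Me = sets borel"
    and Mb: "prob_space Mb" "sets Mb = sets borel"
    and x_bdd: "AE x in Mx. norm x \<le> 1"
    and cov: "\<forall>v. cov_form Mx v v \<ge> \<rho> * (v \<bullet> v)"
    and eps_bdd: "AE e in Me. \<bar>e\<bar> \<le> \<sigma>"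
    and eps_mean: "(\<integral>e. e \<partial>Me) = 0"
    and b_prob: "measure Mb {b. b \<noteq> 0} = \<alpha>"
  shows "(\<integral>\<^sup>+ s. ennreal ((norm (wbar D (6 * D + \<sigma>) ((1 - \<alpha>) * \<rho>) T s - wstar))\<^sup>2)
            \<partial>(PiM {..<2 * T} (\<lambda>_. sample_law wstar Mx Me Mb)))
         \<le> ennreal (72 * (6 * D + \<sigma>)\<^sup>2 * (2 * ln (real T) + 1) / (((1 - \<alpha>) * \<rho>)\<^sup>2 * real T))"
proof -
  interpret huber_sgd D \<sigma> \<alpha> \<rho> wstar Mx Me Mb T
    by (intro huber_sgd.intro huber_regression_model.intro huber_sgd_axioms.intro) (fact assms)+
  show ?thesis
    using nn_integral_sq_dist_wbar_le average_sq_err_le by (rule order_trans[OF _ ennreal_leI])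
qed

end
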